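(* Let $G=(V,E)$ be a regular graph, identified with its (symmetric) random-walk matrix, let $\lambda\in(0,1)$, $q\ge2$, and let $P_{\ge\lambda}$ be the orthogonal projector onto the span of the eigenvectors of $G$ with eigenvalue at least $\lambda$. Then for every nonempty $S\subseteq V$, $$\Phi(S)\ \ge\ 1-\lambda-\|P_{\ge\lambda}\|_{q/(q-1)\to2}^2\,\mu(S)^{(q-2)/q}.$$
   Context: Functions on $V$ carry the uniform (expectation) measure: $\|f\|_p=(\mathbb{E}_{x\in V}|f(x)|^p)^{1/p}$, $\langle f,g\rangle=\mathbb{E}_xf(x)g(x)$, and $\|A\|_{p\to2}=\max_{\|f\|_p\le1}\|Af\|_2$. $\mu(S)=|S|/|V|$. The expansion $\Phi(S)=\Pr[y\notin S]$, where $x$ is uniform in $S$ and $y$ is a uniformly random neighbor of $x$. *)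

theory Defs
  imports "HOL-Analysis.Analysis"
begin

text \<open>Vertices form the finite type 'n; real functions on V are vectors in real^'n.
  The graph is a symmetric adjacency relation E that is d-regular (d > 0).\<close>

definition regular_graph :: "('n::finite \<Rightarrow> 'n \<Rightarrow> bool) \<Rightarrow> nat \<Rightarrow> bool" where
  "regular_graph E d \<longleftrightarrow> (\<forall>x y. E x y = E y x) \<and> d > 0 \<and> (\<forall>x. card {y. E x y} = d)"

definition rw_matrix :: "('n::finite \<Rightarrow> 'n \<Rightarrow> bool) \<Rightarrow> nat \<Rightarrow> real^'n^'n" where
  "rw_matrix E d = (\<chi> x y. if E x y then 1 / real d else 0)"

definition eig_span_ge :: "real^'n^'n \<Rightarrow> real \<Rightarrow> (real^'n) set" where
  "eig_span_ge A lam = span {f. f \<noteq> 0 \<and> (\<exists>mu. mu \<ge> lam \<and> A *v f = mu *\<^sub>R f)}"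

text \<open>Orthogonal projection onto a subspace W (orthogonality w.r.t. the expectation
  inner product, which is a positive multiple of the standard one).\<close>
definition orth_proj :: "(real^'n::finite) set \<Rightarrow> real^'n \<Rightarrow> real^'n" where
  "orth_proj W f = (THE g. g \<in> W \<and> (\<forall>w\<in>W. inner (f - g) w = 0))"

definition pnorm :: "real \<Rightarrow> real^'n::finite \<Rightarrow> real" where
  "pnorm p f = ((\<Sum>x\<in>UNIV. \<bar>f $ x\<bar> powr p) / real CARD('n)) powr (1 / p)"

definition opnorm_p2 :: "real \<Rightarrow> (real^'n::finite \<Rightarrow> real^'n) \<Rightarrow> real" where
  "opnorm_p2 p T = (SUP f\<in>{f. pnorm p f \<le> 1}. pnorm 2 (T f))"

definition meas :: "'n::finite set \<Rightarrow> real" where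
  "meas S = real (card S) / real CARD('n)"

definition expansion :: "('n::finite \<Rightarrow> 'n \<Rightarrow> bool) \<Rightarrow> nat \<Rightarrow> 'n set \<Rightarrow> real" where
  "expansion E d S = (\<Sum>x\<in>S. real (card {y. E x y \<and> y \<notin> S}) / real d) / real (card S)"

end

theory Submission
  imports Defs
begin

text \<open>Write \<open>f = \<one>\<^sub>S = g + h\<close> with \<open>g = P\<^sub>\<ge>\<^sub>\<lambda> f\<close>. Since \<open>G\<close> leaves the span \<open>W\<close> of its
  eigenvectors with eigenvalue \<open>\<ge> \<lambda>\<close> invariant and is symmetric, the cross terms of
  \<open>\<langle>f, G f\<rangle>\<close> vanish; \<open>G\<close> is a contraction, and on the invariant subspace \<open>W\<^sup>\<bottom>\<close> its
  quadratic form is at most \<open>\<lambda>\<close> because \<open>W\<^sup>\<bottom>\<close> contains no eigenvector with eigenvalue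
  \<open>\<ge> \<lambda>\<close>. Hence \<open>\<langle>f, G f\<rangle> \<le> \<parallel>g\<parallel>\<^sup>2 + \<lambda> |S|\<close>, while
  \<open>1 - \<Phi>(S) = \<langle>f, G f\<rangle> / |S|\<close> and, with \<open>p = q/(q-1)\<close>,
  \<open>\<parallel>g\<parallel>\<^sub>2\<^sup>2 \<le> \<parallel>P\<^sub>\<ge>\<^sub>\<lambda>\<parallel>\<^sup>2 \<parallel>\<one>\<^sub>S\<parallel>\<^sub>p\<^sup>2 = \<parallel>P\<^sub>\<ge>\<^sub>\<lambda>\<parallel>\<^sup>2 \<mu>(S)\<^bsup>2(q-1)/q\<^esup>\<close>.\<close>

subsection \<open>Orthogonal projection\<close>

lemma orth_proj_unique:
  fixes W :: "(real^'n::finite) set"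
  assumes "subspace W" "g \<in> W" "\<forall>w\<in>W. inner (f - g) w = 0"
  shows "orth_proj W f = g"
  unfolding orth_proj_def
proof (rule the_equality)
  show "g \<in> W \<and> (\<forall>w\<in>W. inner (f - g) w = 0)" using assms by auto
next
  fix g' assume g': "g' \<in> W \<and> (\<forall>w\<in>W. inner (f - g') w = 0)"
  have "g - g' \<in> W" using g' assms subspace_diff by blast
  then have "inner (f - g') (g - g') - inner (f - g) (g - g') = 0" using g' assms by auto
  then have "inner (g - g') (g - g') = 0" by (simp add: inner_diff_left inner_diff_right)
  then show "g' = g" by simp
qed

lemma orth_proj_mem_orthogonal:
  fixes W :: "(real^'n::finite) set"
  assumes "subspace W"
  shows "orth_proj W f \<in> W" and "\<forall>w\<in>W. inner (f - orth_proj W f) w = 0"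
proof -
  obtain y z where "y \<in> span W" "\<And>w. w \<in> span W \<Longrightarrow> orthogonal z w" "f = y + z"
    using orthogonal_subspace_decomp_exists[of W f] by blast
  moreover have "span W = W" using assms by (simp add: span_eq_iff)
  ultimately have "y \<in> W" "\<forall>w\<in>W. inner (f - y) w = 0"
    by (auto simp: orthogonal_def)
  moreover from this have "orth_proj W f = y" using orth_proj_unique[OF assms] by blast
  ultimately show "orth_proj W f \<in> W" "\<forall>w\<in>W. inner (f - orth_proj W f) w = 0" by simp_all
qed

lemma orth_proj_scaleR:
  fixes W :: "(real^'n::finite) set"
  assumes "subspace W"
  shows "orth_proj W (c *\<^sub>R f) = c *\<^sub>R orth_proj W f"
proof (rule orth_proj_unique[OF assms])
  show "c *\<^sub>R orth_proj W f \<in> W"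
    using orth_proj_mem_orthogonal(1)[OF assms] subspace_scale[OF assms] by blast
  show "\<forall>w\<in>W. inner (c *\<^sub>R f - c *\<^sub>R orth_proj W f) w = 0"
    using orth_proj_mem_orthogonal(2)[OF assms] by (simp add: scaleR_diff_right[symmetric])
qed

lemma inner_orth_proj_le:
  fixes W :: "(real^'n::finite) set"
  assumes "subspace W"
  shows "inner (orth_proj W f) (orth_proj W f) \<le> inner f f"
proof -
  let ?g = "orth_proj W f"
  have "inner (f - ?g) ?g = 0" using orth_proj_mem_orthogonal[OF assms] by blast
  moreover have "inner f f = inner ?g ?g + inner (f - ?g) (f - ?g) + 2 * inner (f - ?g) ?g"
    by (simp add: inner_diff_left inner_diff_right inner_commute algebra_simps)
  ultimately show ?thesis by simp
qed

subsection \<open>Quadratic forms of symmetric matrices\<close>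

lemma inner_symmetric_matrix:
  fixes A :: "real^'n^'n"
  assumes "transpose A = A"
  shows "inner u (A *v v) = inner (A *v u) v"
  by (metis assms dot_lmul_matrix transpose_matrix_vector)

lemma linear_coeff_eq_0_if_quadratic_nonneg:
  fixes a b :: real
  assumes "b \<ge> 0" and nonneg: "\<And>t. 0 \<le> 2 * t * a + t\<^sup>2 * b"
  shows "a = 0"
proof (rule ccontr)
  assume "a \<noteq> 0"
  define t where "t = - a / (b + 1)"
  have "0 \<le> 2 * t * a + t\<^sup>2 * b" by (rule nonneg)
  also have "2 * t * a + t\<^sup>2 * b = a\<^sup>2 / (b + 1) * (b / (b + 1) - 2)"
    using \<open>b \<ge> 0\<close> unfolding t_def
    by (simp add: divide_simps power2_eq_square) (simp add: algebra_simps)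
  also have "\<dots> < 0"
  proof (rule mult_pos_neg)
    have "b / (b + 1) < 1" using \<open>b \<ge> 0\<close> by simp
    then show "b / (b + 1) - 2 < 0" by simp
  qed (use \<open>a \<noteq> 0\<close> \<open>b \<ge> 0\<close> in simp)
  finally show False by simp
qed

text \<open>The maximiser \<open>h\<close> of the quadratic form on the unit sphere of \<open>U\<close> is an eigenvector:
  otherwise moving from \<open>h\<close> towards \<open>v = m h - A h \<in> U\<close> would increase the Rayleigh quotient.\<close>

lemma symmetric_invariant_subspace_top_eigenvector:
  fixes A :: "real^'n::finite^'n" and U :: "(real^'n) set"
  assumes sym: "transpose A = A"
    and U: "subspace U" and inv: "\<And>u. u \<in> U \<Longrightarrow> A *v u \<in> U" and "U \<noteq> {0}"
  obtains h m where "h \<in> U" "h \<noteq> 0" "A *v h = m *\<^sub>R h"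
    and "\<And>u. u \<in> U \<Longrightarrow> inner u (A *v u) \<le> m * inner u u"
proof -
  define K where "K = U \<inter> sphere 0 1"
  have "compact K" unfolding K_def using closed_subspace[OF U]
    by (simp add: closed_Int_compact)
  moreover have "K \<noteq> {}"
  proof -
    obtain u where "u \<in> U" "u \<noteq> 0" using \<open>U \<noteq> {0}\<close> subspace_0[OF U] by blast
    then have "(1 / norm u) *\<^sub>R u \<in> K" unfolding K_def using subspace_scale[OF U] by auto
    then show ?thesis by blast
  qed
  moreover have "continuous_on K (\<lambda>h. inner h (A *v h))"
    by (intro continuous_intros matrix_vector_mult_linear_continuous_on)
  ultimately obtain h where h: "h \<in> K" and hmax: "\<forall>y\<in>K. inner y (A *v y) \<le> inner h (A *v h)"
    using continuous_attains_sup by blast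
  define m where "m = inner h (A *v h)"
  have hU: "h \<in> U" and hh: "inner h h = 1" using h unfolding K_def by (auto simp: norm_eq_1)
  have bound: "inner u (A *v u) \<le> m * inner u u" if "u \<in> U" for u
  proof (cases "u = 0")
    case False
    define c where "c = 1 / norm u"
    have "c *\<^sub>R u \<in> K" unfolding K_def c_def using subspace_scale[OF U] \<open>u \<in> U\<close> False by auto
    then have "inner (c *\<^sub>R u) (A *v (c *\<^sub>R u)) \<le> m" using hmax m_def by blast
    then have "c\<^sup>2 * inner u (A *v u) \<le> m"
      by (simp add: matrix_vector_mult_scaleR power2_eq_square)
    then show ?thesis using False unfolding c_def
      by (simp add: field_simps power2_eq_square flip: power2_norm_eq_inner)
  qed simp
  define v where "v = m *\<^sub>R h - A *v h"
  have vU: "v \<in> U" unfolding v_def using hU inv U subspace_diff subspace_scale by blast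
  have nonneg: "0 \<le> 2 * t * inner v v + t\<^sup>2 * (m * inner v v - inner v (A *v v))" for t
  proof -
    have "h + t *\<^sub>R v \<in> U" using hU vU U subspace_add subspace_scale by blast
    moreover have "m * inner (h + t *\<^sub>R v) (h + t *\<^sub>R v) - inner (h + t *\<^sub>R v) (A *v (h + t *\<^sub>R v))
        = 2 * t * inner v v + t\<^sup>2 * (m * inner v v - inner v (A *v v))"
    proof -
      have quad: "inner (h + t *\<^sub>R v) (A *v (h + t *\<^sub>R v))
          = m + 2 * t * inner (A *v h) v + t\<^sup>2 * inner v (A *v v)"
        using inner_symmetric_matrix[OF sym, of h v]
        by (simp add: m_def matrix_vector_right_distrib matrix_vector_mult_scaleR
            inner_add_left inner_add_right inner_commute[of v "A *v h"] power2_eq_square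
            algebra_simps)
      have norm: "inner (h + t *\<^sub>R v) (h + t *\<^sub>R v) = 1 + 2 * t * inner h v + t\<^sup>2 * inner v v"
        using hh by (simp add: inner_add_left inner_add_right inner_commute[of v h]
            power2_eq_square algebra_simps)
      have vv: "inner v v = m * inner h v - inner (A *v h) v"
        unfolding v_def by (simp add: inner_diff_left inner_commute[of v])
      show ?thesis unfolding quad norm vv by (simp add: algebra_simps)
    qed
    ultimately show ?thesis using bound by fastforce
  qed
  have "0 \<le> m * inner v v - inner v (A *v v)" using bound[OF vU] by simp
  then have "inner v v = 0" using nonneg by (rule linear_coeff_eq_0_if_quadratic_nonneg)
  then have "A *v h = m *\<^sub>R h" unfolding v_def by simp
  moreover have "h \<noteq> 0" using hh by auto
  ultimately show thesis using that hU bound by blast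
qed

lemma eig_span_ge_invariant:
  assumes "w \<in> eig_span_ge A lam"
  shows "A *v w \<in> eig_span_ge A lam"
proof -
  let ?B = "{f. f \<noteq> 0 \<and> (\<exists>mu. mu \<ge> lam \<and> A *v f = mu *\<^sub>R f)}"
  have "(*v) A ` ?B \<subseteq> span ?B"
  proof
    fix y assume "y \<in> (*v) A ` ?B"
    then obtain f mu where "f \<in> ?B" "y = A *v f" "A *v f = mu *\<^sub>R f" by blast
    moreover from \<open>f \<in> ?B\<close> have "mu *\<^sub>R f \<in> span ?B" by (intro span_scale span_base)
    ultimately show "y \<in> span ?B" by simp
  qed
  then have "span ((*v) A ` ?B) \<subseteq> span ?B" using span_mono span_span by blast
  then have "(*v) A ` span ?B \<subseteq> span ?B"
    by (simp add: linear_span_image[OF matrix_vector_mul_linear])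
  then show ?thesis using assms unfolding eig_span_ge_def by blast
qed

lemma subspace_eig_span_ge: "subspace (eig_span_ge A lam)"
  unfolding eig_span_ge_def by (rule subspace_span)

lemma quadratic_form_le_on_orthogonal_eig_span:
  fixes A :: "real^'n::finite^'n"
  assumes sym: "transpose A = A" and u: "\<forall>w\<in>eig_span_ge A lam. inner u w = 0"
  shows "inner u (A *v u) \<le> lam * inner u u"
proof -
  define U where "U = {u. \<forall>w\<in>eig_span_ge A lam. inner u w = 0}"
  have U: "subspace U" unfolding U_def subspace_def by (simp add: inner_add_left)
  have inv: "A *v x \<in> U" if "x \<in> U" for x
  proof -
    have "inner (A *v x) w = 0" if "w \<in> eig_span_ge A lam" for w
      using inner_symmetric_matrix[OF sym, of x w] eig_span_ge_invariant[OF that] \<open>x \<in> U\<close>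
      unfolding U_def by simp
    then show ?thesis unfolding U_def by blast
  qed
  have "u \<in> U" using u unfolding U_def by blast
  show ?thesis
  proof (cases "U = {0}")
    case True
    then have "u = 0" using \<open>u \<in> U\<close> by blast
    then show ?thesis by simp
  next
    case False
    then obtain h m where h: "h \<in> U" "h \<noteq> 0" "A *v h = m *\<^sub>R h"
      and bound: "\<And>x. x \<in> U \<Longrightarrow> inner x (A *v x) \<le> m * inner x x"
      using symmetric_invariant_subspace_top_eigenvector[OF sym U inv] by blast
    have "m < lam"
    proof (rule ccontr)
      assume "\<not> m < lam"
      then have "h \<in> eig_span_ge A lam" unfolding eig_span_ge_def using h by (intro span_base) auto
      then have "inner h h = 0" using \<open>h \<in> U\<close> unfolding U_def by blast
      then show False using \<open>h \<noteq> 0\<close> by simp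
    qed
    then have "m * inner u u \<le> lam * inner u u" by (intro mult_right_mono) auto
    then show ?thesis using bound[OF \<open>u \<in> U\<close>] by linarith
  qed
qed

lemma quadratic_form_le_if_symmetric_stochastic:
  fixes A :: "real^'n::finite^'n"
  assumes sym: "transpose A = A" and nonneg: "\<And>i j. A $ i $ j \<ge> 0"
    and row_sum: "\<And>i. (\<Sum>j\<in>UNIV. A $ i $ j) = 1"
  shows "inner g (A *v g) \<le> inner g g"
proof -
  have entry_sym: "A $ j $ i = A $ i $ j" for i j
    using arg_cong[OF sym, of "\<lambda>B. B $ i $ j"] by (simp add: transpose_def)
  have "inner g (A *v g) = (\<Sum>i\<in>UNIV. \<Sum>j\<in>UNIV. A $ i $ j * (g $ i * g $ j))"
    by (simp add: inner_vec_def matrix_vector_mult_def sum_distrib_left mult_ac)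
  also have "\<dots> \<le> (\<Sum>i\<in>UNIV. \<Sum>j\<in>UNIV. A $ i $ j * ((g $ i)\<^sup>2 / 2 + (g $ j)\<^sup>2 / 2))"
  proof (intro sum_mono mult_left_mono[OF _ nonneg])
    fix i j
    have "0 \<le> (g $ i - g $ j)\<^sup>2" by simp
    then show "g $ i * g $ j \<le> (g $ i)\<^sup>2 / 2 + (g $ j)\<^sup>2 / 2"
      by (simp add: power2_eq_square algebra_simps)
  qed
  also have "\<dots> = (\<Sum>i\<in>UNIV. (g $ i)\<^sup>2 / 2 * (\<Sum>j\<in>UNIV. A $ i $ j))
      + (\<Sum>i\<in>UNIV. \<Sum>j\<in>UNIV. A $ i $ j * (g $ j)\<^sup>2 / 2)"
    by (simp add: distrib_left sum.distrib sum_distrib_right sum_divide_distrib mult_ac)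
  also have "(\<Sum>i\<in>UNIV. \<Sum>j\<in>UNIV. A $ i $ j * (g $ j)\<^sup>2 / 2)
      = (\<Sum>j\<in>UNIV. (g $ j)\<^sup>2 / 2 * (\<Sum>i\<in>UNIV. A $ j $ i))"
    by (subst sum.swap) (simp add: entry_sym sum_distrib_right sum_divide_distrib mult_ac)
  also have "(\<Sum>i\<in>UNIV. (g $ i)\<^sup>2 / 2 * (\<Sum>j\<in>UNIV. A $ i $ j))
      + (\<Sum>j\<in>UNIV. (g $ j)\<^sup>2 / 2 * (\<Sum>i\<in>UNIV. A $ j $ i)) = inner g g"
    by (simp add: row_sum inner_vec_def power2_eq_square flip: sum.distrib)
  finally show ?thesis .
qed

lemma quadratic_form_le_orth_proj_eig_span:
  fixes A :: "real^'n::finite^'n" and f :: "real^'n"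
  assumes sym: "transpose A = A" and contraction: "\<And>x. inner x (A *v x) \<le> inner x x"
    and "lam \<ge> 0"
  defines "g \<equiv> orth_proj (eig_span_ge A lam) f"
  shows "inner f (A *v f) \<le> inner g g + lam * inner f f"
proof -
  define W where "W = eig_span_ge A lam"
  define h where "h = f - g"
  have f_eq: "f = g + h" unfolding h_def by simp
  have W: "subspace W" unfolding W_def by (rule subspace_eig_span_ge)
  have "g \<in> W" and h_perp: "\<forall>w\<in>W. inner h w = 0"
    using orth_proj_mem_orthogonal[OF W, of f] unfolding g_def h_def W_def by auto
  then have "inner h (A *v g) = 0" "inner h g = 0"
    using eig_span_ge_invariant unfolding W_def by auto
  then have split: "inner f (A *v f) = inner g (A *v g) + inner h (A *v h)"
    and pythagoras: "inner f f = inner g g + inner h h"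
    using inner_symmetric_matrix[OF sym, of g h] unfolding h_def[symmetric]
    by (simp_all add: f_eq matrix_vector_right_distrib inner_add_left inner_add_right
        inner_commute)
  have "inner h (A *v h) \<le> lam * inner h h"
    using quadratic_form_le_on_orthogonal_eig_span[OF sym] h_perp unfolding W_def by blast
  also have "\<dots> \<le> lam * inner f f"
    using \<open>lam \<ge> 0\<close> pythagoras by (intro mult_left_mono) auto
  finally show ?thesis using split contraction[of g] by linarith
qed

subsection \<open>Normalised \<open>L\<^sub>p\<close> norms\<close>

definition indicator_vec :: "'n::finite set \<Rightarrow> real^'n" where
  "indicator_vec S = (\<chi> x. if x \<in> S then 1 else 0)"

lemma inner_indicator_vec: "inner (indicator_vec S) (indicator_vec S) = real (card S)"
proof -
  have "inner (indicator_vec S) (indicator_vec S) = (\<Sum>x\<in>UNIV. if x \<in> S then 1 else 0)"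
    unfolding indicator_vec_def inner_vec_def by (intro sum.cong) auto
  then show ?thesis by (simp add: sum.If_cases)
qed

lemma pnorm_two: "pnorm 2 (v::real^'n::finite) = sqrt (inner v v / real CARD('n))"
proof -
  have "\<bar>v $ x\<bar> powr 2 = v $ x * v $ x" for x
    by (simp add: power2_eq_square)
  then show ?thesis unfolding pnorm_def
    by (simp add: inner_vec_def powr_half_sqrt sum_nonneg)
qed

lemma pnorm_scaleR:
  fixes f :: "real^'n::finite"
  assumes "p > 0"
  shows "pnorm p (c *\<^sub>R f) = \<bar>c\<bar> * pnorm p f"
proof -
  let ?M = "(\<Sum>x\<in>UNIV. \<bar>f $ x\<bar> powr p) / real CARD('n)"
  have "(\<Sum>x\<in>UNIV. \<bar>(c *\<^sub>R f) $ x\<bar> powr p) / real CARD('n) = \<bar>c\<bar> powr p * ?M"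
    by (simp add: abs_mult powr_mult sum_distrib_left)
  moreover have "(\<bar>c\<bar> powr p * ?M) powr (1 / p) = (\<bar>c\<bar> powr p) powr (1 / p) * ?M powr (1 / p)"
    by (rule powr_mult)
  moreover have "(\<bar>c\<bar> powr p) powr (1 / p) = \<bar>c\<bar>"
    using assms by (simp add: powr_powr)
  ultimately show ?thesis unfolding pnorm_def by simp
qed

lemma pnorm_indicator_vec:
  assumes "p \<noteq> 0"
  shows "pnorm p (indicator_vec S) = meas S powr (1 / p)"
proof -
  have "(\<Sum>x\<in>UNIV. \<bar>indicator_vec S $ x\<bar> powr p) = (\<Sum>x\<in>UNIV. if x \<in> S then 1 else 0)"
    using assms by (intro sum.cong) (auto simp: indicator_vec_def)
  then show ?thesis by (simp add: pnorm_def meas_def sum.If_cases)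
qed

lemma abs_le_card_if_pnorm_le_1:
  fixes f :: "real^'n::finite"
  assumes p: "p \<ge> 1" and f: "pnorm p f \<le> 1"
  shows "\<bar>f $ x\<bar> \<le> real CARD('n)"
proof -
  define T where "T = (\<Sum>x\<in>UNIV. \<bar>f $ x\<bar> powr p)"
  have "T / real CARD('n) \<le> 1"
  proof (rule ccontr)
    assume "\<not> T / real CARD('n) \<le> 1"
    then have "1 < (T / real CARD('n)) powr (1 / p)" using p by (intro gr_one_powr) auto
    then show False using f unfolding pnorm_def T_def by simp
  qed
  then have T: "T \<le> real CARD('n)" by (simp add: field_simps)
  show ?thesis
  proof (cases "\<bar>f $ x\<bar> \<le> 1")
    case False
    then have "\<bar>f $ x\<bar> powr 1 \<le> \<bar>f $ x\<bar> powr p" using p by (intro powr_mono) auto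
    also have "\<dots> \<le> T" unfolding T_def by (rule member_le_sum) auto
    finally show ?thesis using T False by simp
  next
    case True
    moreover have "1 \<le> real CARD('n)" by simp
    ultimately show ?thesis by linarith
  qed
qed

text \<open>\<open>opnorm_p2\<close> is a supremum in \<open>real\<close>, so it bounds its members only if the set is
  bounded above; the crude bound \<open>\<bar>f x\<bar> \<le> |V|\<close> on the unit ball provides this.\<close>

lemma pnorm_orth_proj_le_opnorm:
  fixes W :: "(real^'n::finite) set"
  assumes W: "subspace W" and p: "p \<ge> 1" and f: "pnorm p f \<le> 1"
  shows "pnorm 2 (orth_proj W f) \<le> opnorm_p2 p (orth_proj W)"
  unfolding opnorm_p2_def
proof (rule cSUP_upper)
  show "f \<in> {f. pnorm p f \<le> 1}" using f by simp
  let ?N = "real CARD('n)"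
  have "pnorm 2 (orth_proj W g) \<le> sqrt (?N ^ 3 / ?N)" if "pnorm p g \<le> 1" for g
  proof -
    have "inner g g = (\<Sum>x\<in>UNIV. \<bar>g $ x\<bar> * \<bar>g $ x\<bar>)" by (simp add: inner_vec_def)
    also have "\<dots> \<le> (\<Sum>x\<in>(UNIV::'n set). ?N * ?N)"
      using abs_le_card_if_pnorm_le_1[OF p that] by (intro sum_mono mult_mono) auto
    also have "\<dots> = ?N ^ 3" by (simp add: power3_eq_cube)
    finally have "inner (orth_proj W g) (orth_proj W g) \<le> ?N ^ 3"
      using inner_orth_proj_le[OF W, of g] by linarith
    then show ?thesis unfolding pnorm_two by (intro real_sqrt_le_mono divide_right_mono) auto
  qed
  then show "bdd_above ((\<lambda>f. pnorm 2 (orth_proj W f)) ` {f. pnorm p f \<le> 1})"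
    by (intro bdd_aboveI2) auto
qed

lemma pnorm_orth_proj_le:
  fixes W :: "(real^'n::finite) set"
  assumes W: "subspace W" and p: "p \<ge> 1" and f: "pnorm p f > 0"
  shows "pnorm 2 (orth_proj W f) \<le> opnorm_p2 p (orth_proj W) * pnorm p f"
proof -
  let ?c = "pnorm p f"
  have "pnorm p ((1 / ?c) *\<^sub>R f) \<le> 1" using p f by (simp add: pnorm_scaleR)
  then have "pnorm 2 (orth_proj W ((1 / ?c) *\<^sub>R f)) \<le> opnorm_p2 p (orth_proj W)"
    by (rule pnorm_orth_proj_le_opnorm[OF W p])
  then have "pnorm 2 ((1 / ?c) *\<^sub>R orth_proj W f) \<le> opnorm_p2 p (orth_proj W)"
    by (simp only: orth_proj_scaleR[OF W])
  then show ?thesis using f by (simp add: pnorm_scaleR field_simps)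
qed

lemma inner_orth_proj_indicator_vec_le:
  fixes W :: "(real^'n::finite) set" and S :: "'n set"
  assumes W: "subspace W" and "q \<ge> 2" and "S \<noteq> {}"
  defines "g \<equiv> orth_proj W (indicator_vec S)"
  shows "inner g g \<le> real (card S) * (opnorm_p2 (q / (q - 1)) (orth_proj W))\<^sup>2
                        * meas S powr ((q - 2) / q)"
proof -
  define p where "p = q / (q - 1)"
  define opn where "opn = opnorm_p2 p (orth_proj W)"
  let ?N = "real CARD('n)" and ?\<mu> = "meas S"
  have "p \<ge> 1" and inv_p: "1 / p = (q - 1) / q" using \<open>q \<ge> 2\<close> by (simp_all add: p_def)
  have \<mu>: "?\<mu> > 0" using \<open>S \<noteq> {}\<close> by (simp add: meas_def card_gt_0_iff)
  have "pnorm p (indicator_vec S) = ?\<mu> powr ((q - 1) / q)"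
    using \<open>p \<ge> 1\<close> by (simp add: pnorm_indicator_vec inv_p)
  then have "sqrt (inner g g / ?N) \<le> opn * ?\<mu> powr ((q - 1) / q)"
    using pnorm_orth_proj_le[OF W \<open>p \<ge> 1\<close>, of "indicator_vec S"] \<mu>
    by (simp add: g_def opn_def pnorm_two)
  then have "inner g g / ?N \<le> (opn * ?\<mu> powr ((q - 1) / q))\<^sup>2"
    by (rule sqrt_le_D)
  also have "\<dots> = opn\<^sup>2 * ?\<mu> powr ((q - 1) / q + (q - 1) / q)"
    by (simp only: power2_eq_square powr_add mult_ac)
  also have "(q - 1) / q + (q - 1) / q = 1 + (q - 2) / q"
    using \<open>q \<ge> 2\<close> by (simp add: field_simps)
  also have "?\<mu> powr (1 + (q - 2) / q) = ?\<mu> * ?\<mu> powr ((q - 2) / q)"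
    using \<mu> by (simp add: powr_add)
  finally have "inner g g \<le> (?\<mu> * ?N) * (opn\<^sup>2 * ?\<mu> powr ((q - 2) / q))"
    by (simp add: pos_divide_le_eq mult_ac)
  also have "?\<mu> * ?N = real (card S)" by (simp add: meas_def)
  finally show ?thesis by (simp add: opn_def p_def mult_ac)
qed

subsection \<open>The random-walk matrix\<close>

lemma rw_matrix_transpose:
  assumes "regular_graph E d"
  shows "transpose (rw_matrix E d) = rw_matrix E d"
  using assms by (auto simp: regular_graph_def rw_matrix_def transpose_def vec_eq_iff)

lemma rw_matrix_row_sum:
  assumes "regular_graph E d"
  shows "(\<Sum>y\<in>UNIV. rw_matrix E d $ x $ y) = 1"
proof -
  have "d > 0" "card {y. E x y} = d" using assms unfolding regular_graph_def by blast+
  moreover have "(\<Sum>y\<in>UNIV. rw_matrix E d $ x $ y) = real (card {y. E x y}) / real d"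
    by (simp add: rw_matrix_def sum.If_cases)
  ultimately show ?thesis by simp
qed

lemma inner_indicator_vec_rw_matrix:
  "inner (indicator_vec S) (rw_matrix E d *v indicator_vec S)
    = (\<Sum>x\<in>S. real (card {y. E x y \<and> y \<in> S}) / real d)"
proof -
  have "inner (indicator_vec S) (rw_matrix E d *v indicator_vec S)
      = (\<Sum>x\<in>UNIV. if x \<in> S then (\<Sum>y\<in>UNIV. if E x y \<and> y \<in> S then 1 / real d else 0) else 0)"
    by (auto simp: inner_vec_def matrix_vector_mult_def rw_matrix_def indicator_vec_def
        intro!: sum.cong)
  then show ?thesis by (simp add: sum.If_cases)
qed

lemma expansion_eq_quadratic_form:
  assumes "regular_graph E d" and "S \<noteq> {}"
  shows "expansion E d S
    = 1 - inner (indicator_vec S) (rw_matrix E d *v indicator_vec S) / real (card S)"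
proof -
  let ?in = "\<lambda>x. real (card {y. E x y \<and> y \<in> S})"
  have "d > 0" and deg: "card {y. E x y} = d" for x
    using assms(1) unfolding regular_graph_def by blast+
  have out: "real (card {y. E x y \<and> y \<notin> S}) = real d - ?in x" for x
  proof -
    have "{y. E x y} = {y. E x y \<and> y \<in> S} \<union> {y. E x y \<and> y \<notin> S}" by auto
    then have "card {y. E x y} = card {y. E x y \<and> y \<in> S} + card {y. E x y \<and> y \<notin> S}"
      by (simp add: card_Un_disjoint disjoint_iff)
    then show ?thesis using deg[of x] by simp
  qed
  have "expansion E d S = (\<Sum>x\<in>S. 1 - ?in x / real d) / real (card S)"
    unfolding expansion_def using \<open>d > 0\<close> by (simp add: out diff_divide_distrib)
  also have "\<dots> = 1 - (\<Sum>x\<in>S. ?in x / real d) / real (card S)"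
    using \<open>S \<noteq> {}\<close> by (simp add: sum_subtractf diff_divide_distrib card_gt_0_iff)
  finally show ?thesis by (simp only: inner_indicator_vec_rw_matrix)
qed

theorem lemmaD4:
  fixes E :: "'n::finite \<Rightarrow> 'n \<Rightarrow> bool" and d :: nat
    and lam q :: real and S :: "'n set"
  assumes "regular_graph E d"
    and "0 < lam" and "lam < 1"
    and "q \<ge> 2"
    and "S \<noteq> {}"
  shows "expansion E d S \<ge> 1 - lam
           - (opnorm_p2 (q / (q - 1)) (orth_proj (eig_span_ge (rw_matrix E d) lam)))\<^sup>2
             * meas S powr ((q - 2) / q)"
proof -
  define A where "A = rw_matrix E d"
  define W where "W = eig_span_ge A lam"
  define f where "f = indicator_vec S"
  define g where "g = orth_proj W f"
  define s where "s = real (card S)"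
  define bound where "bound = (opnorm_p2 (q / (q - 1)) (orth_proj W))\<^sup>2 * meas S powr ((q - 2) / q)"
  have "s > 0" using \<open>S \<noteq> {}\<close> by (simp add: s_def card_gt_0_iff)
  have "inner f f = s" unfolding f_def s_def by (rule inner_indicator_vec)
  moreover have "inner f (A *v f) \<le> inner g g + lam * inner f f"
    unfolding A_def g_def W_def using \<open>lam > 0\<close>
    by (intro quadratic_form_le_orth_proj_eig_span quadratic_form_le_if_symmetric_stochastic
        rw_matrix_transpose rw_matrix_row_sum \<open>regular_graph E d\<close>) (auto simp: rw_matrix_def)
  moreover have "inner g g \<le> s * bound"
    using inner_orth_proj_indicator_vec_le[of W q S] \<open>q \<ge> 2\<close> \<open>S \<noteq> {}\<close>
    unfolding g_def f_def s_def bound_def W_def by (simp add: subspace_eig_span_ge mult.assoc)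
  ultimately have "inner f (A *v f) / s \<le> bound + lam"
    using \<open>s > 0\<close> by (simp add: divide_le_eq algebra_simps)
  moreover have "expansion E d S = 1 - inner f (A *v f) / s"
    unfolding A_def f_def s_def by (rule expansion_eq_quadratic_form[OF assms(1,5)])
  ultimately show ?thesis unfolding bound_def W_def A_def by linarith
qed

end
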